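(* (Non-overlap scenario.) Let $\mathbf p^*\in\mathbf\Omega$ be a limiting point of the distributed projected gradient iteration with $\mathbf p^*\in\mathrm{int}\,\mathbf\Omega$ (so that $\frac{\partial J}{\partial p_i}(\mathbf p^* )=0$ for all $i$). If at $\mathbf p^*$ no two satellites have overlapping coverage regions, then $\mathbf p^*$ is a local minimum of $J$.
   Context: Coverage model. Fix an integer $n\ge 3$ and constants $r_s>0$, $\omega>0$, $T_s=2\pi/\omega$, $0<p^{\mathrm m}<r_s$. Satellites are indexed by $\mathcal N=\{1,\dots,n\}$, indices taken cyclically modulo $n$. Satellite $i$ has an initial angle $\phi_i^0$ (with $0=\phi_1^0<\phi_2^0<\dots<\phi_n^0<2\pi$), a coverage angle $\alpha_i\in(0,\pi)$, a maximum coverage intensity $\psi_i^{\mathrm m}>0$, and slope $k_i=\psi_i^{\mathrm m}/\alpha_i$. The strategy (relative position) of satellite $i$ is $p_i=(p_{ix},p_{iy})\in\Omega_i:=\{p\in\mathbb R^2:\ \|p\|_2\le p^{\mathrm m},\ (p_x+r_s)^2+p_y^2=r_s^2\}$, a closed circular arc; $\mathrm{bd}\,\Omega_i$ denotes its two endpoints and $\mathrm{int}\,\Omega_i$ the rest of the arc. Write $\mathbf p=(p_1,\dots,p_n)\in\mathbf\Omega=\prod_i\Omega_i$. Deviation angle: $\Delta\phi_i(p_i)=\operatorname{sgn}(p_{iy})\arccos\big((p_{ix}+r_s)/\sqrt{(p_{ix}+r_s)^2+p_{iy}^2}\big)$. Configuration angle at time $\tau$: $\phi_i(p_i,\tau)=\phi_i^0+\Delta\phi_i(p_i)+\omega\tau$.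 Coverage regions (angles in $\theta$, understood modulo $2\pi$): $C_i^+=(\phi_i,\phi_i+\alpha_i)$, $C_i^-=(\phi_i-\alpha_i,\phi_i)$, $C_i=C_i^+\cup C_i^-\cup\{\phi_i\}$. Local coverage intensity: $\psi_i(p_i,\theta,\tau)=\psi_i^{\mathrm m}-k_i(\theta-\phi_i)$ for $\theta\in C_i^+\cup\{\phi_i\}$, $\psi_i^{\mathrm m}+k_i(\theta-\phi_i)$ for $\theta\in C_i^-$, and $0$ otherwise (with $\theta$ shifted by a multiple of $2\pi$ so that $\theta-\phi_i\in(-\pi,\pi]$). Demand: $\mu:\mathbb R\to[0,\infty)$ continuous and $2\pi$-periodic. Global intensity $\rho(\mathbf p,\theta,\tau)=\sum_{i=1}^n\psi_i(p_i,\theta,\tau)$. Potential (accumulated average coverage cost): $J(\mathbf p)=\frac{1}{2T_s}\int_0^{T_s}\int_{\omega\tau}^{\omega\tau+2\pi}(\rho(\mathbf p,\theta,\tau)-\mu(\theta))^2\,\mathrm d\theta\,\mathrm d\tau$. The distributed projected gradient iteration is $p_i^{(k+1)}=\operatorname{proj}_{\Omega_i}\big(p_i^{(k)}-s^{(k)}\frac{\partial J}{\partial p_i}(\mathbf p^{(k)})\big)$ for all $i$. *)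

theory Defs
  imports "HOL-Analysis.Analysis"
begin

text \<open>Satellites are indexed by 1..n; a joint strategy is a map
  nat => real x real (only the values on 1..n matter).\<close>

text \<open>Reduce an angle difference to the representative in (-pi, pi].\<close>
definition wrap_angle :: "real \<Rightarrow> real" where
  "wrap_angle d = d - 2 * pi * of_int \<lceil>(d - pi) / (2 * pi)\<rceil>"

definition dev_angle :: "real \<Rightarrow> real \<times> real \<Rightarrow> real" where
  "dev_angle rs p = sgn (snd p) *
     arccos ((fst p + rs) / sqrt ((fst p + rs)\<^sup>2 + (snd p)\<^sup>2))"

definition conf_angle :: "real \<Rightarrow> real \<Rightarrow> real \<Rightarrow> real \<times> real \<Rightarrow> real \<Rightarrow> real" where
  "conf_angle rs \<omega> phi0 p \<tau> = phi0 + dev_angle rs p + \<omega> * \<tau>"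

text \<open>Coverage region C_i (as a 2pi-periodic subset of the reals).\<close>
definition cov_region ::
  "real \<Rightarrow> real \<Rightarrow> real \<Rightarrow> real \<Rightarrow> real \<times> real \<Rightarrow> real \<Rightarrow> real set" where
  "cov_region rs \<omega> phi0 \<alpha> p \<tau> =
     {\<theta>. \<bar>wrap_angle (\<theta> - conf_angle rs \<omega> phi0 p \<tau>)\<bar> < \<alpha>}"

definition local_intensity ::
  "real \<Rightarrow> real \<Rightarrow> real \<Rightarrow> real \<Rightarrow> real \<Rightarrow> real \<times> real \<Rightarrow> real \<Rightarrow> real \<Rightarrow> real" where
  "local_intensity rs \<omega> phi0 \<alpha> psim p \<theta> \<tau> =
     (let d = wrap_angle (\<theta> - conf_angle rs \<omega> phi0 p \<tau>); k = psim / \<alpha> in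
      if 0 \<le> d \<and> d < \<alpha> then psim - k * d
      else if - \<alpha> < d \<and> d < 0 then psim + k * d
      else 0)"

definition global_intensity ::
  "nat \<Rightarrow> real \<Rightarrow> real \<Rightarrow> (nat \<Rightarrow> real) \<Rightarrow> (nat \<Rightarrow> real) \<Rightarrow> (nat \<Rightarrow> real)
     \<Rightarrow> (nat \<Rightarrow> real \<times> real) \<Rightarrow> real \<Rightarrow> real \<Rightarrow> real" where
  "global_intensity n rs \<omega> phi0 \<alpha> psim p \<theta> \<tau> =
     (\<Sum>i = 1..n. local_intensity rs \<omega> (phi0 i) (\<alpha> i) (psim i) (p i) \<theta> \<tau>)"

definition coverage_cost ::
  "nat \<Rightarrow> real \<Rightarrow> real \<Rightarrow> (nat \<Rightarrow> real) \<Rightarrow> (nat \<Rightarrow> real) \<Rightarrow> (nat \<Rightarrow> real)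
     \<Rightarrow> (real \<Rightarrow> real) \<Rightarrow> (nat \<Rightarrow> real \<times> real) \<Rightarrow> real" where
  "coverage_cost n rs \<omega> phi0 \<alpha> psim \<mu> p =
     (let Ts = 2 * pi / \<omega> in
      1 / (2 * Ts) * integral {0..Ts} (\<lambda>\<tau>.
        integral {\<omega> * \<tau> .. \<omega> * \<tau> + 2 * pi} (\<lambda>\<theta>.
          (global_intensity n rs \<omega> phi0 \<alpha> psim p \<theta> \<tau> - \<mu> \<theta>)\<^sup>2)))"

text \<open>Strategy set Omega_i (closed circular arc), its endpoints and the rest of the arc.\<close>
definition Omega :: "real \<Rightarrow> real \<Rightarrow> (real \<times> real) set" where
  "Omega rs pm = {p. norm p \<le> pm \<and> (fst p + rs)\<^sup>2 + (snd p)\<^sup>2 = rs\<^sup>2}"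

definition Omega_bd :: "real \<Rightarrow> real \<Rightarrow> (real \<times> real) set" where
  "Omega_bd rs pm = {p \<in> Omega rs pm. norm p = pm}"

definition Omega_int :: "real \<Rightarrow> real \<Rightarrow> (real \<times> real) set" where
  "Omega_int rs pm = Omega rs pm - Omega_bd rs pm"

definition partial_grad ::
  "((nat \<Rightarrow> real \<times> real) \<Rightarrow> real) \<Rightarrow> (nat \<Rightarrow> real \<times> real) \<Rightarrow> nat \<Rightarrow> real \<times> real" where
  "partial_grad J p i =
     (SOME g. ((\<lambda>q. J (p(i := q))) has_derivative (\<lambda>h. inner g h)) (at (p i)))"

definition is_proj :: "(real \<times> real) set \<Rightarrow> real \<times> real \<Rightarrow> real \<times> real \<Rightarrow> bool" where
  "is_proj S x y \<longleftrightarrow> y \<in> S \<and> (\<forall>z\<in>S. dist x y \<le> dist x z)"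

end

theory Submission imports Defs begin

text \<open>Averaging over one revolution of the constellation, the cross term between the coverage
  intensity and the demand no longer depends on the strategies, and neither does the integral of
  the squared single-satellite intensities (each is a translate of a fixed periodic tent). Hence
  \<open>J\<close> equals, up to a strategy-independent constant, half the integral of the squared global
  intensity over one period. Since the local intensities are nonnegative, the square of their sum
  dominates the sum of their squares, with equality exactly where no two of them are positive at
  the same angle.\<close>

lemma integral_periodic_window:
  fixes f :: "real \<Rightarrow> real"
  assumes cont: "continuous_on UNIV f" and T: "T > 0" and per: "\<And>x. f (x + T) = f x"
  shows "integral {a..a+T} f = integral {0..T} f"
proof -
  define b where "b = min a 0 - 1"
  define B where "B = max a 0 + 1"
  define Phi where "Phi x = integral {b..x} f" for x
  have dPhi: "(Phi has_real_derivative f x) (at x)" if "b < x" "x < B + T + 1" for x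
  proof -
    have "(Phi has_real_derivative f x) (at x within {b..B + T + 1})"
      unfolding Phi_def
      by (rule integral_has_real_derivative) (use that cont continuous_on_subset in auto)
    moreover have "x \<in> interior {b..B + T + 1}" using that by auto
    ultimately show ?thesis using at_within_interior by metis
  qed
  define W where "W y = Phi (y + T) - Phi y" for y
  have W: "W y = integral {y..y+T} f" if "b \<le> y" for y
  proof -
    have "integral {b..y} f + integral {y..y+T} f = integral {b..y+T} f"
      by (rule Henstock_Kurzweil_Integration.integral_combine)
         (use that T in \<open>simp_all add: integrable_continuous_real continuous_on_subset[OF cont]\<close>)
    then show ?thesis unfolding W_def Phi_def by simp
  qed
  have "DERIV W y :> 0" if "y \<in> {b<..<B}" for y
  proof -
    have "DERIV W y :> f (y + T) * 1 - f y"
      unfolding W_def using that T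
      by (intro DERIV_diff DERIV_chain2[of Phi] dPhi) (auto intro!: derivative_eq_intros)
    then show ?thesis using per by simp
  qed
  then have "W a = W 0"
    by (intro DERIV_isconst3[of b B]) (auto simp: b_def B_def)
  then show ?thesis using W[of a] W[of 0] by (simp add: b_def)
qed

lemma continuous_on_compose_UNIV:
  "continuous_on UNIV f \<Longrightarrow> continuous_on S h \<Longrightarrow> continuous_on S (\<lambda>x. f (h x))"
  using continuous_on_compose2[of UNIV f S h] by auto

definition periodic_correlation :: "(real \<Rightarrow> real) \<Rightarrow> (real \<Rightarrow> real) \<Rightarrow> real \<Rightarrow> real" where
  "periodic_correlation g \<mu> s = integral {0..2*pi} (\<lambda>u. g u * \<mu> (u + s))"

lemma continuous_on_periodic_correlation:
  assumes "continuous_on UNIV g" "continuous_on UNIV \<mu>"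
  shows "continuous_on UNIV (periodic_correlation g \<mu>)"
proof -
  have "continuous_on (UNIV \<times> cbox 0 (2*pi)) (\<lambda>z. g (snd z) * \<mu> (snd z + fst z))"
    by (intro continuous_intros continuous_on_compose_UNIV[OF assms(1)]
        continuous_on_compose_UNIV[OF assms(2)])
  then have "continuous_on UNIV (\<lambda>s. integral (cbox 0 (2*pi)) (\<lambda>u. g u * \<mu> (u + s)))"
    by (intro integral_continuous_on_param) (simp add: case_prod_beta)
  then show ?thesis unfolding periodic_correlation_def by simp
qed

lemma periodic_correlation_periodic:
  assumes "\<And>x. \<mu> (x + 2*pi) = \<mu> x"
  shows "periodic_correlation g \<mu> (s + 2*pi) = periodic_correlation g \<mu> s"
  unfolding periodic_correlation_def by (simp add: add.assoc[symmetric] assms)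

lemma integral_shifted_periodic_product:
  fixes g \<mu> :: "real \<Rightarrow> real"
  assumes gc: "continuous_on UNIV g" and gp: "\<And>x. g (x + 2*pi) = g x"
    and mc: "continuous_on UNIV \<mu>" and mp: "\<And>x. \<mu> (x + 2*pi) = \<mu> x"
  shows "integral {c..c+2*pi} (\<lambda>\<theta>. g (\<theta> - b) * \<mu> \<theta>) = periodic_correlation g \<mu> b"
proof -
  have "integral {c..c+2*pi} (\<lambda>\<theta>. g (\<theta> - b) * \<mu> \<theta>)
      = integral {c - b..c - b + 2*pi} (\<lambda>u. g u * \<mu> (u + b))"
    using integral_shift_real_ivl[of c b "c+2*pi" "\<lambda>\<theta>. g (\<theta> - b) * \<mu> \<theta>"]
    by (simp add: algebra_simps)
  also have "\<dots> = periodic_correlation g \<mu> b"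
  proof -
    have "continuous_on UNIV (\<lambda>u. g u * \<mu> (u + b))"
      by (intro continuous_intros gc continuous_on_compose_UNIV[OF mc])
    moreover have "g (u + 2*pi) * \<mu> (u + 2*pi + b) = g u * \<mu> (u + b)" for u
      using gp[of u] mp[of "u + b"] by (simp add: algebra_simps)
    ultimately show ?thesis
      unfolding periodic_correlation_def by (intro integral_periodic_window) auto
  qed
  finally show ?thesis .
qed

lemma integral_window_square_expansion:
  fixes g :: "nat \<Rightarrow> real \<Rightarrow> real" and \<mu> :: "real \<Rightarrow> real"
  assumes fin: "finite I"
    and gc: "\<And>i. i \<in> I \<Longrightarrow> continuous_on UNIV (g i)"
    and gp: "\<And>i x. i \<in> I \<Longrightarrow> g i (x + 2*pi) = g i x"
    and mc: "continuous_on UNIV \<mu>" and mp: "\<And>x. \<mu> (x + 2*pi) = \<mu> x"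
  shows "integral {c..c+2*pi} (\<lambda>\<theta>. ((\<Sum>i\<in>I. g i (\<theta> - (a i + c))) - \<mu> \<theta>)\<^sup>2)
    = integral {0..2*pi} (\<lambda>u. (\<Sum>i\<in>I. g i (u - a i))\<^sup>2)
      - 2 * (\<Sum>i\<in>I. periodic_correlation (g i) \<mu> (a i + c))
      + integral {0..2*pi} (\<lambda>\<theta>. (\<mu> \<theta>)\<^sup>2)"
proof -
  define R where "R u = (\<Sum>i\<in>I. g i (u - a i))" for u
  have Rc: "continuous_on S (\<lambda>x. R (h x))" if "continuous_on S h" for S h
    unfolding R_def by (intro continuous_on_sum continuous_on_compose_UNIV[OF gc] continuous_intros that)
  have R: "(\<Sum>i\<in>I. g i (\<theta> - (a i + c))) = R (\<theta> - c)" for \<theta>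
    unfolding R_def by (simp add: algebra_simps)
  have expand: "((\<Sum>i\<in>I. g i (\<theta> - (a i + c))) - \<mu> \<theta>)\<^sup>2
      = (R (\<theta> - c))\<^sup>2 - 2 * (\<Sum>i\<in>I. g i (\<theta> - (a i + c)) * \<mu> \<theta>) + (\<mu> \<theta>)\<^sup>2" for \<theta>
    unfolding sum_distrib_right[symmetric] R by (simp add: power2_eq_square algebra_simps)
  have "((\<lambda>\<theta>. (R (\<theta> - c))\<^sup>2) has_integral integral {0..2*pi} (\<lambda>u. (R u)\<^sup>2)) {c..c+2*pi}"
    using integral_shift_real_ivl[of c c "c+2*pi" "\<lambda>\<theta>. (R (\<theta> - c))\<^sup>2"]
    by (auto intro!: integrable_integral integrable_continuous_real continuous_intros Rc)
  moreover have "((\<lambda>\<theta>. g i (\<theta> - (a i + c)) * \<mu> \<theta>) has_integral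
      periodic_correlation (g i) \<mu> (a i + c)) {c..c+2*pi}" if "i \<in> I" for i
    unfolding has_integral_integrable_integral
      integral_shifted_periodic_product[OF gc[OF that] gp[OF that] mc mp]
    by (intro conjI refl integrable_continuous_real continuous_intros
        continuous_on_compose_UNIV[OF gc[OF that]] continuous_on_compose_UNIV[OF mc])
  moreover have "((\<lambda>\<theta>. (\<mu> \<theta>)\<^sup>2) has_integral integral {0..2*pi} (\<lambda>\<theta>. (\<mu> \<theta>)\<^sup>2)) {c..c+2*pi}"
    unfolding has_integral_integrable_integral
    by (intro conjI integrable_continuous_real continuous_intros integral_periodic_window
        continuous_on_compose_UNIV[OF mc]) (auto simp: mp)
  ultimately show ?thesis
    unfolding expand R_def[symmetric]
    by (intro integral_unique has_integral_add has_integral_diff has_integral_mult_right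
        has_integral_sum fin) auto
qed

lemma integral_time_average_periodic:
  fixes K :: "real \<Rightarrow> real"
  assumes Kc: "continuous_on UNIV K" and Kp: "\<And>x. K (x + 2*pi) = K x" and \<omega>: "\<omega> > 0"
  shows "integral {0..2*pi/\<omega>} (\<lambda>\<tau>. K (b + \<omega>*\<tau>)) = integral {0..2*pi} K / \<omega>"
proof -
  have "((\<lambda>\<tau>. \<omega> *\<^sub>R K (b + \<omega>*\<tau>)) has_integral integral {b + \<omega>*0..b + \<omega>*(2*pi/\<omega>)} K)
      {0..2*pi/\<omega>}"
  proof (rule has_integral_substitution[where c = b and d = "b + 2*pi"])
    show "(\<lambda>\<tau>. b + \<omega>*\<tau>) ` {0..2*pi/\<omega>} \<subseteq> {b..b + 2*pi}"
      using \<omega> by (auto simp: field_simps)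
  qed (use \<omega> in \<open>auto intro!: derivative_eq_intros continuous_on_subset[OF Kc]\<close>)
  moreover have "integral {b + \<omega>*0..b + \<omega>*(2*pi/\<omega>)} K = integral {0..2*pi} K"
    using integral_periodic_window[OF Kc _ Kp, of b] \<omega> by simp
  ultimately have "((\<lambda>\<tau>. 1/\<omega> * (\<omega> * K (b + \<omega>*\<tau>))) has_integral 1/\<omega> * integral {0..2*pi} K)
      {0..2*pi/\<omega>}"
    by (intro has_integral_mult_right) simp
  then show ?thesis
    using \<omega> by (simp add: integral_unique)
qed

text \<open>The constant \<open>B\<close> collects the demand term and the time-averaged cross term; only
  the self-interaction of the rotating intensities depends on the phases \<open>a i\<close>.\<close>

lemma rotating_coverage_cost_eq:
  fixes g :: "nat \<Rightarrow> real \<Rightarrow> real" and \<mu> :: "real \<Rightarrow> real"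
  assumes fin: "finite I" and \<omega>: "\<omega> > 0"
    and gc: "\<And>i. i \<in> I \<Longrightarrow> continuous_on UNIV (g i)"
    and gp: "\<And>i x. i \<in> I \<Longrightarrow> g i (x + 2*pi) = g i x"
    and mc: "continuous_on UNIV \<mu>" and mp: "\<And>x. \<mu> (x + 2*pi) = \<mu> x"
  shows "\<exists>B. \<forall>a. 1/(2*(2*pi/\<omega>)) * integral {0..2*pi/\<omega>} (\<lambda>\<tau>. integral {\<omega>*\<tau>..\<omega>*\<tau>+2*pi}
            (\<lambda>\<theta>. ((\<Sum>i\<in>I. g i (\<theta> - (a i + \<omega>*\<tau>))) - \<mu> \<theta>)\<^sup>2))
        = 1/2 * integral {0..2*pi} (\<lambda>u. (\<Sum>i\<in>I. g i (u - a i))\<^sup>2) + B"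
proof (intro exI allI)
  fix a :: "nat \<Rightarrow> real"
  define K where "K i = periodic_correlation (g i) \<mu>" for i
  define A where "A = integral {0..2*pi} (\<lambda>u. (\<Sum>i\<in>I. g i (u - a i))\<^sup>2)"
  define M where "M = integral {0..2*pi} (\<lambda>\<theta>. (\<mu> \<theta>)\<^sup>2)"
  define Ts where "Ts = 2*pi/\<omega>"
  have Kc: "continuous_on UNIV (K i)" if "i \<in> I" for i
    unfolding K_def using gc[OF that] mc by (rule continuous_on_periodic_correlation)
  have Kp: "K i (s + 2*pi) = K i s" for i s
    unfolding K_def using mp by (rule periodic_correlation_periodic)
  have "((\<lambda>\<tau>. K i (a i + \<omega>*\<tau>)) has_integral integral {0..2*pi} (K i) / \<omega>) {0..Ts}"
    if "i \<in> I" for i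
    unfolding has_integral_integrable_integral Ts_def
      integral_time_average_periodic[OF Kc[OF that] Kp \<omega>]
    by (auto intro!: integrable_continuous_real continuous_on_compose_UNIV[OF Kc[OF that]]
        continuous_intros)
  moreover have "((\<lambda>\<tau>. c) has_integral Ts * c) {0..Ts}" for c
    using has_integral_const_real[of c 0 Ts] \<omega> by (simp add: Ts_def)
  ultimately have "((\<lambda>\<tau>. A - 2 * (\<Sum>i\<in>I. K i (a i + \<omega>*\<tau>)) + M) has_integral
      (Ts * A - 2 * ((\<Sum>i\<in>I. integral {0..2*pi} (K i)) / \<omega>) + Ts * M)) {0..Ts}"
    unfolding sum_divide_distrib
    by (intro has_integral_add has_integral_diff has_integral_mult_right has_integral_sum fin)
  moreover have "integral {\<omega>*\<tau>..\<omega>*\<tau>+2*pi} (\<lambda>\<theta>. ((\<Sum>i\<in>I. g i (\<theta> - (a i + \<omega>*\<tau>))) - \<mu> \<theta>)\<^sup>2)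
      = A - 2 * (\<Sum>i\<in>I. K i (a i + \<omega>*\<tau>)) + M" for \<tau>
    unfolding A_def K_def M_def by (rule integral_window_square_expansion[OF fin gc gp mc mp])
  ultimately have "integral {0..Ts} (\<lambda>\<tau>. integral {\<omega>*\<tau>..\<omega>*\<tau>+2*pi}
            (\<lambda>\<theta>. ((\<Sum>i\<in>I. g i (\<theta> - (a i + \<omega>*\<tau>))) - \<mu> \<theta>)\<^sup>2))
      = Ts * A - 2 * ((\<Sum>i\<in>I. integral {0..2*pi} (K i)) / \<omega>) + Ts * M"
    by (simp only: integral_unique)
  then show "1/(2*(2*pi/\<omega>)) * integral {0..2*pi/\<omega>} (\<lambda>\<tau>. integral {\<omega>*\<tau>..\<omega>*\<tau>+2*pi}
            (\<lambda>\<theta>. ((\<Sum>i\<in>I. g i (\<theta> - (a i + \<omega>*\<tau>))) - \<mu> \<theta>)\<^sup>2))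
        = 1/2 * A + (M/2 - (\<Sum>i\<in>I. integral {0..2*pi} (K i)) / (2*pi))"
    using \<omega> pi_gt_zero unfolding Ts_def by (simp add: field_simps)
qed

lemma sum_squares_le_square_sum:
  fixes x :: "'a \<Rightarrow> real"
  assumes "finite I" "\<And>i. i \<in> I \<Longrightarrow> x i \<ge> 0"
  shows "(\<Sum>i\<in>I. (x i)\<^sup>2) \<le> (\<Sum>i\<in>I. x i)\<^sup>2"
proof -
  have "x i * x i \<le> x i * (\<Sum>j\<in>I. x j)" if "i \<in> I" for i
    using assms that by (intro mult_left_mono member_le_sum) auto
  then have "(\<Sum>i\<in>I. x i * x i) \<le> (\<Sum>i\<in>I. x i * (\<Sum>j\<in>I. x j))"
    by (rule sum_mono)
  then show ?thesis by (simp add: power2_eq_square sum_distrib_right)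
qed

lemma square_sum_eq_sum_squares:
  fixes x :: "'a \<Rightarrow> real"
  assumes fin: "finite I" and orth: "\<And>i j. i \<in> I \<Longrightarrow> j \<in> I \<Longrightarrow> i \<noteq> j \<Longrightarrow> x i * x j = 0"
  shows "(\<Sum>i\<in>I. x i)\<^sup>2 = (\<Sum>i\<in>I. (x i)\<^sup>2)"
proof -
  have "(\<Sum>i\<in>I. x i)\<^sup>2 = (\<Sum>i\<in>I. x i * (\<Sum>j\<in>I. x j))"
    by (simp add: power2_eq_square sum_distrib_right)
  also have "\<dots> = (\<Sum>i\<in>I. (x i)\<^sup>2)"
  proof (rule sum.cong[OF refl])
    fix i assume i: "i \<in> I"
    have "x i * (\<Sum>j\<in>I. x j) = x i * x i + (\<Sum>j\<in>I - {i}. x i * x j)"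
      using sum.remove[OF fin i] by (simp add: sum_distrib_left)
    also have "(\<Sum>j\<in>I - {i}. x i * x j) = 0"
      using orth[OF i] by (intro sum.neutral) auto
    finally show "x i * (\<Sum>j\<in>I. x j) = (x i)\<^sup>2" by (simp add: power2_eq_square)
  qed
  finally show ?thesis .
qed

lemma integral_sum_squares_shifted:
  fixes g :: "nat \<Rightarrow> real \<Rightarrow> real"
  assumes fin: "finite I"
    and gc: "\<And>i. i \<in> I \<Longrightarrow> continuous_on UNIV (g i)"
    and gp: "\<And>i x. i \<in> I \<Longrightarrow> g i (x + 2*pi) = g i x"
  shows "integral {0..2*pi} (\<lambda>u. \<Sum>i\<in>I. (g i (u - a i))\<^sup>2) = (\<Sum>i\<in>I. integral {0..2*pi} (\<lambda>u. (g i u)\<^sup>2))"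
proof -
  have "integral {0..2*pi} (\<lambda>u. (g i (u - a i))\<^sup>2) = integral {0..2*pi} (\<lambda>u. (g i u)\<^sup>2)"
    if "i \<in> I" for i
  proof -
    have "integral {0..2*pi} (\<lambda>u. (g i (u - a i))\<^sup>2) = integral {-a i..-a i+2*pi} (\<lambda>u. (g i u)\<^sup>2)"
      using integral_shift_real_ivl[of "-a i" "-a i" "-a i+2*pi" "\<lambda>u. (g i u)\<^sup>2"] by simp
    also have "\<dots> = integral {0..2*pi} (\<lambda>u. (g i u)\<^sup>2)"
      using that by (intro integral_periodic_window) (auto intro!: continuous_intros gc simp: gp)
    finally show ?thesis .
  qed
  then show ?thesis
    by (subst integral_sum)
       (auto intro!: fin integrable_continuous_real continuous_intros continuous_on_compose_UNIV[OF gc])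
qed

lemma integral_sum_squares_le_integral_square_sum:
  fixes g :: "nat \<Rightarrow> real \<Rightarrow> real"
  assumes fin: "finite I"
    and gc: "\<And>i. i \<in> I \<Longrightarrow> continuous_on UNIV (g i)"
    and gp: "\<And>i x. i \<in> I \<Longrightarrow> g i (x + 2*pi) = g i x"
    and nonneg: "\<And>i x. i \<in> I \<Longrightarrow> g i x \<ge> 0"
  shows "(\<Sum>i\<in>I. integral {0..2*pi} (\<lambda>u. (g i u)\<^sup>2))
    \<le> integral {0..2*pi} (\<lambda>u. (\<Sum>i\<in>I. g i (u - a i))\<^sup>2)"
proof -
  have "(\<Sum>i\<in>I. integral {0..2*pi} (\<lambda>u. (g i u)\<^sup>2))
      = integral {0..2*pi} (\<lambda>u. \<Sum>i\<in>I. (g i (u - a i))\<^sup>2)"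
    by (rule integral_sum_squares_shifted[OF fin gc gp, symmetric])
  also have "\<dots> \<le> integral {0..2*pi} (\<lambda>u. (\<Sum>i\<in>I. g i (u - a i))\<^sup>2)"
  proof (rule integral_le)
    show "(\<lambda>u. \<Sum>i\<in>I. (g i (u - a i))\<^sup>2) integrable_on {0..2*pi}"
      "(\<lambda>u. (\<Sum>i\<in>I. g i (u - a i))\<^sup>2) integrable_on {0..2*pi}"
      by (intro integrable_continuous_real continuous_intros continuous_on_compose_UNIV[OF gc];
          assumption)+
    show "(\<Sum>i\<in>I. (g i (u - a i))\<^sup>2) \<le> (\<Sum>i\<in>I. g i (u - a i))\<^sup>2" for u
      using fin nonneg by (rule sum_squares_le_square_sum)
  qed
  finally show ?thesis .
qed

lemma integral_square_sum_eq_sum_integral_squares: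
  fixes g :: "nat \<Rightarrow> real \<Rightarrow> real"
  assumes fin: "finite I"
    and gc: "\<And>i. i \<in> I \<Longrightarrow> continuous_on UNIV (g i)"
    and gp: "\<And>i x. i \<in> I \<Longrightarrow> g i (x + 2*pi) = g i x"
    and disjoint: "\<And>u i j. i \<in> I \<Longrightarrow> j \<in> I \<Longrightarrow> i \<noteq> j \<Longrightarrow> g i (u - a i) * g j (u - a j) = 0"
  shows "integral {0..2*pi} (\<lambda>u. (\<Sum>i\<in>I. g i (u - a i))\<^sup>2)
    = (\<Sum>i\<in>I. integral {0..2*pi} (\<lambda>u. (g i u)\<^sup>2))"
  using integral_sum_squares_shifted[OF fin gc gp, where a = a]
  by (simp add: square_sum_eq_sum_squares[OF fin disjoint])

lemma wrap_angle_bounds: "- pi < wrap_angle d" "wrap_angle d \<le> pi"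
proof -
  define c where "c = \<lceil>(d - pi) / (2*pi)\<rceil>"
  have "of_int c - 1 < (d - pi) / (2*pi)" "(d - pi) / (2*pi) \<le> of_int c"
    using ceiling_correct unfolding c_def by blast+
  then have "(of_int c - 1) * (2*pi) < d - pi" "d - pi \<le> of_int c * (2*pi)"
    by (simp_all add: pos_less_divide_eq pos_divide_le_eq)
  then show "- pi < wrap_angle d" "wrap_angle d \<le> pi"
    unfolding wrap_angle_def c_def[symmetric] by (simp_all add: algebra_simps)
qed

lemma abs_wrap_angle: "\<bar>wrap_angle d\<bar> = arccos (cos d)"
proof -
  have "cos (wrap_angle d) = cos d"
    unfolding wrap_angle_def by (simp add: cos_diff)
  then show ?thesis
    using arccos_cos_eq_abs[of "wrap_angle d"] wrap_angle_bounds[of d] by simp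
qed

lemma mem_cov_region_iff:
  "\<theta> \<in> cov_region rs \<omega> phi0 \<alpha> p \<tau> \<longleftrightarrow> arccos (cos (\<theta> - conf_angle rs \<omega> phi0 p \<tau>)) < \<alpha>"
  unfolding cov_region_def abs_wrap_angle by simp

text \<open>\<open>arccos (cos x)\<close> is the distance from \<open>x\<close> to \<open>2\<pi>\<int>\<close>, so this is the \<open>2\<pi>\<close>-periodic tent of
  height \<open>ps\<close> and half-width \<open>al\<close>.\<close>

definition tent :: "real \<Rightarrow> real \<Rightarrow> real \<Rightarrow> real" where
  "tent al ps x = max 0 (ps - ps/al * arccos (cos x))"

lemma continuous_on_tent: "continuous_on UNIV (tent al ps)"
  unfolding tent_def
  by (intro continuous_intros continuous_on_compose2[OF continuous_on_arccos']) auto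

lemma tent_periodic: "tent al ps (x + 2*pi) = tent al ps x"
  unfolding tent_def by simp

lemma tent_nonneg: "tent al ps x \<ge> 0"
  unfolding tent_def by simp

lemma tent_eq_0_iff:
  assumes "0 < al" "0 < ps"
  shows "tent al ps x = 0 \<longleftrightarrow> al \<le> arccos (cos x)"
  using assms by (auto simp: tent_def max_def field_simps)

lemma local_intensity_eq_tent:
  assumes "0 < al" "0 < ps"
  shows "local_intensity rs \<omega> phi0 al ps p \<theta> \<tau> = tent al ps (\<theta> - conf_angle rs \<omega> phi0 p \<tau>)"
proof -
  define d where "d = wrap_angle (\<theta> - conf_angle rs \<omega> phi0 p \<tau>)"
  have "arccos (cos (\<theta> - conf_angle rs \<omega> phi0 p \<tau>)) = \<bar>d\<bar>"
    unfolding d_def abs_wrap_angle ..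
  moreover have "ps - ps/al * \<bar>d\<bar> \<le> 0 \<longleftrightarrow> al \<le> \<bar>d\<bar>"
    using assms by (simp add: field_simps)
  ultimately show ?thesis
    unfolding local_intensity_def tent_def Let_def d_def[symmetric]
    by (cases "d \<ge> 0") (auto simp: max_def simp del: arccos_cos_eq_abs)
qed

lemma coverage_cost_eq_tent_profile:
  assumes \<omega>: "\<omega> > 0"
    and \<alpha>: "\<And>i. i \<in> {1..n} \<Longrightarrow> 0 < \<alpha> i" and psim: "\<And>i. i \<in> {1..n} \<Longrightarrow> 0 < psim i"
    and mc: "continuous_on UNIV \<mu>" and mp: "\<And>\<theta>. \<mu> (\<theta> + 2 * pi) = \<mu> \<theta>"
  shows "\<exists>B. \<forall>p. coverage_cost n rs \<omega> phi0 \<alpha> psim \<mu> p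
    = 1/2 * integral {0..2*pi}
        (\<lambda>u. (\<Sum>i\<in>{1..n}. tent (\<alpha> i) (psim i) (u - (phi0 i + dev_angle rs (p i))))\<^sup>2) + B"
proof -
  obtain B where B: "\<And>a. 1/(2*(2*pi/\<omega>)) * integral {0..2*pi/\<omega>} (\<lambda>\<tau>.
      integral {\<omega>*\<tau>..\<omega>*\<tau>+2*pi}
        (\<lambda>\<theta>. ((\<Sum>i\<in>{1..n}. tent (\<alpha> i) (psim i) (\<theta> - (a i + \<omega>*\<tau>))) - \<mu> \<theta>)\<^sup>2))
    = 1/2 * integral {0..2*pi} (\<lambda>u. (\<Sum>i\<in>{1..n}. tent (\<alpha> i) (psim i) (u - a i))\<^sup>2) + B"
    using rotating_coverage_cost_eq[of "{1..n}" \<omega> "\<lambda>i. tent (\<alpha> i) (psim i)" \<mu>]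
    by (auto simp: \<omega> continuous_on_tent tent_periodic mc mp)
  have "global_intensity n rs \<omega> phi0 \<alpha> psim p \<theta> \<tau>
      = (\<Sum>i\<in>{1..n}. tent (\<alpha> i) (psim i) (\<theta> - ((phi0 i + dev_angle rs (p i)) + \<omega>*\<tau>)))" for p \<theta> \<tau>
    unfolding global_intensity_def
    by (intro sum.cong refl) (simp add: local_intensity_eq_tent \<alpha> psim conf_angle_def)
  then show ?thesis
    unfolding coverage_cost_def Let_def using B by auto
qed

theorem proposition6:
  fixes n :: nat and rs \<omega> pm :: real
    and phi0 \<alpha> psim :: "nat \<Rightarrow> real" and \<mu> :: "real \<Rightarrow> real"
    and pseq :: "nat \<Rightarrow> nat \<Rightarrow> real \<times> real" and s :: "nat \<Rightarrow> real"
    and pstar :: "nat \<Rightarrow> real \<times> real"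
  assumes n3: "n \<ge> 3"
    and rs_pos: "rs > 0" and \<omega>_pos: "\<omega> > 0" and pm: "0 < pm" "pm < rs"
    and phi0_1: "phi0 1 = 0"
    and phi0_mono: "\<And>i. 1 \<le> i \<Longrightarrow> i < n \<Longrightarrow> phi0 i < phi0 (i + 1)"
    and phi0_n: "phi0 n < 2 * pi"
    and \<alpha>_rng: "\<And>i. i \<in> {1..n} \<Longrightarrow> 0 < \<alpha> i \<and> \<alpha> i < pi"
    and psim_pos: "\<And>i. i \<in> {1..n} \<Longrightarrow> psim i > 0"
    and \<mu>_cont: "continuous_on UNIV \<mu>"
    and \<mu>_nonneg: "\<And>\<theta>. \<mu> \<theta> \<ge> 0"
    and \<mu>_per: "\<And>\<theta>. \<mu> (\<theta> + 2 * pi) = \<mu> \<theta>"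
    \<comment> \<open>pstar is a limiting point of the distributed projected gradient iteration\<close>
    and iter: "\<And>k i. i \<in> {1..n} \<Longrightarrow>
       is_proj (Omega rs pm)
         (pseq k i - s k *\<^sub>R partial_grad (coverage_cost n rs \<omega> phi0 \<alpha> psim \<mu>) (pseq k) i)
         (pseq (Suc k) i)"
    and limpt: "\<exists>r. strict_mono r \<and>
       (\<forall>i\<in>{1..n}. ((\<lambda>k. pseq (r k) i) \<longlonglongrightarrow> pstar i))"
    \<comment> \<open>pstar lies in int Omega and is stationary\<close>
    and interior: "\<And>i. i \<in> {1..n} \<Longrightarrow> pstar i \<in> Omega_int rs pm"
    and stationary: "\<And>i. i \<in> {1..n} \<Longrightarrow>
       ((\<lambda>q. coverage_cost n rs \<omega> phi0 \<alpha> psim \<mu> (pstar(i := q))) has_derivative (\<lambda>h. 0))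
         (at (pstar i))"
    \<comment> \<open>no two coverage regions overlap at pstar\<close>
    and nonoverlap: "\<And>i j \<tau>. i \<in> {1..n} \<Longrightarrow> j \<in> {1..n} \<Longrightarrow> i \<noteq> j \<Longrightarrow>
       cov_region rs \<omega> (phi0 i) (\<alpha> i) (pstar i) \<tau> \<inter>
       cov_region rs \<omega> (phi0 j) (\<alpha> j) (pstar j) \<tau> = {}"
  shows "\<exists>e>0. \<forall>p. (\<forall>i\<in>{1..n}. p i \<in> Omega rs pm \<and> dist (p i) (pstar i) < e) \<longrightarrow>
           coverage_cost n rs \<omega> phi0 \<alpha> psim \<mu> pstar \<le> coverage_cost n rs \<omega> phi0 \<alpha> psim \<mu> p"
proof -
  define g where "g i u = tent (\<alpha> i) (psim i) u" for i u
  define a where "a p i = phi0 i + dev_angle rs (p i)" for p :: "nat \<Rightarrow> real \<times> real" and i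
  have g: "continuous_on UNIV (g i)" "g i (x + 2*pi) = g i x" "g i x \<ge> 0" for i x
    unfolding g_def by (simp_all add: continuous_on_tent tent_periodic tent_nonneg)
  have "\<exists>B. \<forall>p. coverage_cost n rs \<omega> phi0 \<alpha> psim \<mu> p
      = 1/2 * integral {0..2*pi} (\<lambda>u. (\<Sum>i\<in>{1..n}. g i (u - a p i))\<^sup>2) + B"
    unfolding g_def a_def
    by (rule coverage_cost_eq_tent_profile) (use \<omega>_pos \<alpha>_rng psim_pos \<mu>_cont \<mu>_per in auto)
  then obtain B where cost: "\<And>p. coverage_cost n rs \<omega> phi0 \<alpha> psim \<mu> p
      = 1/2 * integral {0..2*pi} (\<lambda>u. (\<Sum>i\<in>{1..n}. g i (u - a p i))\<^sup>2) + B"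
    by blast
  have in_region: "u \<in> cov_region rs \<omega> (phi0 k) (\<alpha> k) (pstar k) 0"
    if "k \<in> {1..n}" "g k (u - a pstar k) \<noteq> 0" for k u
    using that \<alpha>_rng psim_pos
    by (simp add: mem_cov_region_iff tent_eq_0_iff g_def a_def conf_angle_def not_le)
  have "g i (u - a pstar i) * g j (u - a pstar j) = 0"
    if "i \<in> {1..n}" "j \<in> {1..n}" "i \<noteq> j" for u i j
    using nonoverlap[OF that, of 0] in_region that by auto
  then have "integral {0..2*pi} (\<lambda>u. (\<Sum>i\<in>{1..n}. g i (u - a pstar i))\<^sup>2)
      = (\<Sum>i\<in>{1..n}. integral {0..2*pi} (\<lambda>u. (g i u)\<^sup>2))"
    by (intro integral_square_sum_eq_sum_integral_squares g) auto
  moreover have "(\<Sum>i\<in>{1..n}. integral {0..2*pi} (\<lambda>u. (g i u)\<^sup>2))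
      \<le> integral {0..2*pi} (\<lambda>u. (\<Sum>i\<in>{1..n}. g i (u - a p i))\<^sup>2)" for p
    by (intro integral_sum_squares_le_integral_square_sum g) auto
  ultimately show ?thesis
    unfolding cost by (intro exI[of _ "1::real"]) simp
qed

end
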